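(* Let $T$ be a power bounded operator. Then $T\overset{d}{\prec} S$ if and only if the isometric asymptote of $T$ is not unitary.
   Context: $S$ denotes the simple unilateral shift, i.e. multiplication by the independent variable on the Hardy space $H^2$. For operators $T\in\mathcal L(\mathcal H)$, $R\in\mathcal L(\mathcal K)$, the notation $T\overset{d}{\prec} R$ means that there exists a transformation $X\in\mathcal L(\mathcal H,\mathcal K)$ with dense range such that $XT=RX$. An operator $T$ is power bounded if $\sup_{n\ge0}\|T^n\|<\infty$. For a power bounded operator $T$, the isometric asymptote $(X_{T,+},V)$ (in the sense of Kérchy) consists of an isometry $V$ and a canonical intertwining mapping $X_{T,+}$ realizing $T\overset{d}{\prec} V$, with the universality property that every intertwining of $T$ with an isometry factors through $X_{T,+}$; the isometry $V$ itself is also called the isometric asymptote of $T$. *)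

theory Defs
  imports "HOL-Analysis.Analysis"
begin

text \<open>The distribution has no complex inner product spaces, so we introduce them
  as type classes: a complex vector space structure compatible with the real one,
  a complex (sesquilinear, conjugate-linear in the first argument) inner product
  inducing the norm, and completeness.\<close>

class complex_vector = real_vector +
  fixes scaleC :: "complex \<Rightarrow> 'a \<Rightarrow> 'a" (infixr "*\<^sub>C" 75)
  assumes scaleC_add_right: "a *\<^sub>C (x + y) = a *\<^sub>C x + a *\<^sub>C y"
    and scaleC_add_left: "(a + b) *\<^sub>C x = a *\<^sub>C x + b *\<^sub>C x"
    and scaleC_scaleC: "a *\<^sub>C (b *\<^sub>C x) = (a * b) *\<^sub>C x"
    and scaleC_one: "1 *\<^sub>C x = x"
    and scaleR_scaleC: "scaleR r x = complex_of_real r *\<^sub>C x"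

class complex_inner = complex_vector + real_normed_vector +
  fixes cinner :: "'a \<Rightarrow> 'a \<Rightarrow> complex"
  assumes cinner_commute: "cinner x y = cnj (cinner y x)"
    and cinner_add_left: "cinner (x + y) z = cinner x z + cinner y z"
    and cinner_scaleC_left: "cinner (a *\<^sub>C x) y = cnj a * cinner x y"
    and cinner_self_norm: "cinner x x = complex_of_real ((norm x)\<^sup>2)"

class chilbert_space = complex_inner + complete_space

definition bounded_clinear :: "('a::complex_inner \<Rightarrow> 'b::complex_inner) \<Rightarrow> bool" where
  "bounded_clinear f \<longleftrightarrow> bounded_linear f \<and> (\<forall>c x. f (c *\<^sub>C x) = c *\<^sub>C f x)"

definition power_bounded :: "('a::complex_inner \<Rightarrow> 'a) \<Rightarrow> bool" where
  "power_bounded T \<longleftrightarrow> bounded_clinear T \<and> (\<exists>C. \<forall>n. onorm (T ^^ n) \<le> C)"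

definition isometry :: "('a::complex_inner \<Rightarrow> 'b::complex_inner) \<Rightarrow> bool" where
  "isometry V \<longleftrightarrow> bounded_clinear V \<and> (\<forall>x. norm (V x) = norm x)"

text \<open>A unitary operator is a surjective isometry (equivalently \<open>V\<^sup>* V = V V\<^sup>* = I\<close>).\<close>
definition unitary :: "('a::complex_inner \<Rightarrow> 'a) \<Rightarrow> bool" where
  "unitary V \<longleftrightarrow> isometry V \<and> surj V"

definition dense_intertwined ::
  "('a::complex_inner \<Rightarrow> 'a) \<Rightarrow> ('b::complex_inner \<Rightarrow> 'b) \<Rightarrow> bool" (infix "\<prec>\<^sub>d" 50) where
  "T \<prec>\<^sub>d R \<longleftrightarrow> (\<exists>X. bounded_clinear X \<and> closure (range X) = UNIV \<and> X \<circ> T = R \<circ> X)"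

definition cspan :: "'a::complex_vector set \<Rightarrow> 'a set" where
  "cspan A = {\<Sum>a\<in>F. c a *\<^sub>C a | F c. finite F \<and> F \<subseteq> A}"

text \<open>Simple unilateral shift: an isometry \<open>S\<close> for which some unit vector \<open>e\<close> makes
  \<open>(S\<^sup>n e)\<^sub>n\<close> an orthonormal basis (i.e. \<open>S\<close> is unitarily equivalent to
  multiplication by \<open>z\<close> on \<open>H\<^sup>2\<close>, with \<open>e\<close> corresponding to the constant \<open>1\<close>).\<close>
definition simple_unilateral_shift :: "('a::complex_inner \<Rightarrow> 'a) \<Rightarrow> bool" where
  "simple_unilateral_shift S \<longleftrightarrow> isometry S \<and>
     (\<exists>e. norm e = 1 \<and> (\<forall>n m. n \<noteq> m \<longrightarrow> cinner ((S ^^ n) e) ((S ^^ m) e) = 0)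
          \<and> closure (cspan (range (\<lambda>n. (S ^^ n) e))) = UNIV)"

text \<open>Since HOL cannot quantify over
  types inside a formula, universality is required for isometries \<open>W\<close> acting on spaces
  of the type given by the \<open>itself\<close> argument.\<close>
definition isometric_asymptote ::
  "('a::chilbert_space \<Rightarrow> 'a) \<Rightarrow> ('a \<Rightarrow> 'k::chilbert_space) \<Rightarrow> ('k \<Rightarrow> 'k)
     \<Rightarrow> 'e::chilbert_space itself \<Rightarrow> bool" where
  "isometric_asymptote T X V (_ :: 'e itself) \<longleftrightarrow>
     isometry V \<and> bounded_clinear X \<and> closure (range X) = UNIV \<and> X \<circ> T = V \<circ> X \<and>
     (\<forall>(W::'e \<Rightarrow> 'e) (Y::'a \<Rightarrow> 'e). isometry W \<and> bounded_clinear Y \<and> Y \<circ> T = W \<circ> Y \<longrightarrow>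
        (\<exists>!Z. bounded_clinear Z \<and> Z \<circ> V = W \<circ> Z \<and> Y = Z \<circ> X))"

end

theory Submission
  imports Defs
begin

text \<open>If \<open>V\<close> is unitary and \<open>Y\<close> realizes \<open>T \<prec>\<^sub>d S\<close>, universality factors
  \<open>Y = Z X\<close> with \<open>Z V = S Z\<close>, so \<open>range Y \<subseteq> range Z = range (Z V) \<subseteq> range S\<close>.  As the range
  of the isometry \<open>S\<close> is closed and contains the dense set \<open>range Y\<close>, \<open>S\<close> would be onto,
  which a unilateral shift is not.

  If \<open>V\<close> is not unitary, its range is a proper closed subspace, so some unit vector \<open>e\<close> is
  orthogonal to it; then \<open>(V\<^sup>n e)\<^sub>n\<close> is orthonormal.  The contraction
  \<open>k \<mapsto> \<Sum>\<^sub>n \<langle>V\<^sup>n e, k\<rangle> S\<^sup>n f\<close>, with \<open>(S\<^sup>n f)\<^sub>n\<close> the orthonormal basis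
  of the shift, intertwines \<open>V\<close> with \<open>S\<close> and has dense range, so \<open>T \<prec>\<^sub>d V \<prec>\<^sub>d S\<close>.
  Power boundedness of \<open>T\<close> is what makes the isometric asymptote exist; the argument
  itself does not use it.\<close>

lemma cnj_mult_self: "cnj z * z = complex_of_real ((cmod z)\<^sup>2)"
  by (metis complex_norm_square mult.commute)

lemma scaleC_zero_left [simp]: "(0::complex) *\<^sub>C (x::'a::complex_vector) = 0"
  by (metis of_real_0 scaleR_scaleC scaleR_zero_left)

lemma scaleC_scaleR_commute: "a *\<^sub>C (r *\<^sub>R (x::'a::complex_vector)) = r *\<^sub>R (a *\<^sub>C x)"
  by (simp add: scaleR_scaleC scaleC_scaleC mult.commute)

lemma cinner_zero_left [simp]: "cinner 0 (y::'a::complex_inner) = 0"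
  by (metis add_0 add_cancel_right_right cinner_add_left)

lemma cinner_zero_right [simp]: "cinner (x::'a::complex_inner) 0 = 0"
  by (metis cinner_commute cinner_zero_left complex_cnj_zero)

lemma cinner_add_right: "cinner (x::'a::complex_inner) (y + z) = cinner x y + cinner x z"
  by (metis cinner_add_left cinner_commute complex_cnj_add)

lemma cinner_scaleC_right: "cinner (x::'a::complex_inner) (a *\<^sub>C y) = a * cinner x y"
  by (metis cinner_commute cinner_scaleC_left complex_cnj_cnj complex_cnj_mult)

lemma cinner_scaleR_left: "cinner (r *\<^sub>R x::'a::complex_inner) y = of_real r * cinner x y"
  by (simp add: scaleR_scaleC cinner_scaleC_left)

lemma cinner_minus_right: "cinner (x::'a::complex_inner) (- y) = - cinner x y"
  by (metis cinner_add_right cinner_zero_right add_eq_0_iff)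

lemma cinner_diff_right: "cinner (x::'a::complex_inner) (y - z) = cinner x y - cinner x z"
  by (metis diff_conv_add_uminus cinner_add_right cinner_minus_right)

lemma cinner_sum_left: "cinner (sum f F) (y::'a::complex_inner) = (\<Sum>i\<in>F. cinner (f i) y)"
  by (induction F rule: infinite_finite_induct) (auto simp: cinner_add_left)

lemma cinner_sum_right: "cinner (y::'a::complex_inner) (sum f F) = (\<Sum>i\<in>F. cinner y (f i))"
  by (induction F rule: infinite_finite_induct) (auto simp: cinner_add_right)

lemma norm_scaleC: "norm (a *\<^sub>C (x::'a::complex_inner)) = cmod a * norm x"
proof -
  have "complex_of_real ((norm (a *\<^sub>C x))\<^sup>2) = cnj a * a * complex_of_real ((norm x)\<^sup>2)"
    by (metis cinner_self_norm cinner_scaleC_left cinner_scaleC_right mult.assoc)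
  also have "cnj a * a = complex_of_real ((cmod a)\<^sup>2)"
    by (rule cnj_mult_self)
  finally have "(norm (a *\<^sub>C x))\<^sup>2 = (cmod a * norm x)\<^sup>2"
    by (metis of_real_eq_iff of_real_mult power_mult_distrib)
  then show ?thesis
    by simp
qed

lemma power2_norm_add:
  "(norm (x + y))\<^sup>2 = (norm x)\<^sup>2 + (norm y)\<^sup>2 + 2 * Re (cinner (x::'a::complex_inner) y)"
proof -
  have "complex_of_real ((norm (x + y))\<^sup>2) = cinner (x + y) (x + y)"
    by (rule cinner_self_norm [symmetric])
  also have "\<dots> = cinner x x + cinner y y + cinner x y + cnj (cinner x y)"
    by (simp add: cinner_add_left cinner_add_right cinner_commute [of y x])
  finally have "(norm (x + y))\<^sup>2 = Re (cinner x x + cinner y y + cinner x y + cnj (cinner x y))"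
    by (metis Re_complex_of_real)
  then show ?thesis
    by (simp add: cinner_self_norm)
qed

lemma power2_norm_diff:
  "(norm (x - y))\<^sup>2 = (norm x)\<^sup>2 + (norm y)\<^sup>2 - 2 * Re (cinner (x::'a::complex_inner) y)"
  using power2_norm_add [of x "- y"] by (simp add: cinner_minus_right)

lemma apollonius_identity:
  fixes x a b :: "'a::complex_inner"
  shows "(norm (a - b))\<^sup>2 =
    2 * (norm (x - a))\<^sup>2 + 2 * (norm (x - b))\<^sup>2 - 4 * (norm (x - (1/2) *\<^sub>R (a + b)))\<^sup>2"
proof -
  have "(x - a) + (x - b) = 2 *\<^sub>R (x - (1/2) *\<^sub>R (a + b))"
    by (simp add: algebra_simps scaleR_2)
  then have "(norm ((x - a) + (x - b)))\<^sup>2 = 4 * (norm (x - (1/2) *\<^sub>R (a + b)))\<^sup>2"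
    by (simp add: power_mult_distrib)
  moreover have "(x - a) - (x - b) = b - a"
    by simp
  ultimately show ?thesis
    using power2_norm_add [of "x - a" "x - b"] power2_norm_diff [of "x - a" "x - b"]
    by (simp add: norm_minus_commute [of a b])
qed

subclass (in chilbert_space) banach ..

lemma bounded_clinear_bounded_linear: "bounded_clinear f \<Longrightarrow> bounded_linear f"
  by (simp add: bounded_clinear_def)

lemma bounded_clinear_scaleC: "bounded_clinear f \<Longrightarrow> f (c *\<^sub>C x) = c *\<^sub>C f x"
  by (simp add: bounded_clinear_def)

lemma bounded_clinear_add: "bounded_clinear f \<Longrightarrow> f (x + y) = f x + f y"
  by (simp add: bounded_clinear_def linear_add bounded_linear.linear)

lemma bounded_clinear_zero: "bounded_clinear f \<Longrightarrow> f 0 = 0"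
  by (simp add: bounded_clinear_def linear_0 bounded_linear.linear)

lemma bounded_clinear_compose:
  "bounded_clinear f \<Longrightarrow> bounded_clinear g \<Longrightarrow> bounded_clinear (f \<circ> g)"
  unfolding bounded_clinear_def using bounded_linear_compose [of f g] by (auto simp: o_def)

lemma bounded_linear_scaleC: "bounded_linear (\<lambda>x::'a::complex_inner. a *\<^sub>C x)"
  by (rule bounded_linear_intro [where K = "cmod a"])
    (auto simp: scaleC_add_right scaleC_scaleR_commute norm_scaleC)

lemma isometry_cinner:
  assumes "isometry V"
  shows "cinner (V x) (V y) = cinner x y"
proof -
  have lin: "bounded_clinear V" and norm: "\<And>x. norm (V x) = norm x"
    using assms by (auto simp: isometry_def)
  have Re: "Re (cinner (V x) (V y)) = Re (cinner x y)" for x y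
    using power2_norm_add [of "V x" "V y"] power2_norm_add [of x y]
    by (simp add: norm bounded_clinear_add [OF lin, symmetric])
  show ?thesis
  proof (rule complex_eqI)
    show "Im (cinner (V x) (V y)) = Im (cinner x y)"
      using Re [of "\<i> *\<^sub>C x" y] by (simp add: bounded_clinear_scaleC [OF lin] cinner_scaleC_left)
  qed (rule Re)
qed

lemma norm_funpow_isometry:
  "isometry (V :: 'a::complex_inner \<Rightarrow> 'a) \<Longrightarrow> norm ((V ^^ n) x) = norm x"
  by (induction n) (auto simp: isometry_def)

lemma cinner_funpow_isometry:
  "isometry (V :: 'a::complex_inner \<Rightarrow> 'a) \<Longrightarrow> cinner ((V ^^ n) x) ((V ^^ n) y) = cinner x y"
  by (induction n) (auto simp: isometry_cinner)

lemma closed_range_isometry: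
  fixes V :: "'a::chilbert_space \<Rightarrow> 'b::chilbert_space"
  assumes "isometry V"
  shows "closed (range V)"
proof (rule complete_imp_closed)
  show "complete (range V)"
    using assms by (intro complete_isometric_image [where e = 1])
      (auto simp: isometry_def bounded_clinear_def complete_UNIV)
qed

lemma dense_intertwined_trans:
  assumes "T \<prec>\<^sub>d R" and "R \<prec>\<^sub>d Q"
  shows "T \<prec>\<^sub>d Q"
proof -
  obtain X where X: "bounded_clinear X" "closure (range X) = UNIV" "X \<circ> T = R \<circ> X"
    using assms(1) by (auto simp: dense_intertwined_def)
  obtain P where P: "bounded_clinear P" "closure (range P) = UNIV" "P \<circ> R = Q \<circ> P"
    using assms(2) by (auto simp: dense_intertwined_def)
  have "P ` closure (range X) \<subseteq> closure (P ` range X)"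
    by (intro image_closure_subset linear_continuous_on closure_subset
        bounded_clinear_bounded_linear [OF P(1)]) simp
  then have "range P \<subseteq> closure (range (P \<circ> X))"
    by (simp add: X(2) image_comp)
  then have "closure (range (P \<circ> X)) = UNIV"
    using P(2) closure_minimal [of "range P"] by auto
  moreover have "(P \<circ> X) \<circ> T = Q \<circ> (P \<circ> X)"
    by (metis P(3) X(3) comp_assoc)
  ultimately show ?thesis
    using bounded_clinear_compose [OF P(1) X(1)] by (auto simp: dense_intertwined_def)
qed

section \<open>Nearest points and orthogonal complements\<close>

lemma Cauchy_if_power2_dist_le:
  fixes u :: "nat \<Rightarrow> 'a::metric_space"
  assumes bound: "\<And>m n. (dist (u m) (u n))\<^sup>2 \<le> \<delta> m + \<delta> n" and "\<delta> \<longlonglongrightarrow> 0"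
  shows "Cauchy u"
proof (rule metric_CauchyI)
  fix e :: real
  assume "0 < e"
  then have "0 < e\<^sup>2 / 2"
    by simp
  obtain N where N: "\<And>n. n \<ge> N \<Longrightarrow> \<bar>\<delta> n\<bar> < e\<^sup>2 / 2"
    using LIMSEQ_D [OF \<open>\<delta> \<longlonglongrightarrow> 0\<close> \<open>0 < e\<^sup>2 / 2\<close>] unfolding diff_zero real_norm_def by blast
  have "dist (u m) (u n) < e" if "N \<le> m" and "N \<le> n" for m n
  proof -
    have "(dist (u m) (u n))\<^sup>2 < e\<^sup>2"
      using bound [of m n] N [OF that(1)] N [OF that(2)] by linarith
    then show ?thesis
      using \<open>0 < e\<close> by (simp add: power_less_imp_less_base)
  qed
  then show "\<exists>M. \<forall>m\<ge>M. \<forall>n\<ge>M. dist (u m) (u n) < e"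
    by blast
qed

lemma closed_convex_nearest_point:
  fixes C :: "'a::chilbert_space set"
  assumes "closed C" and "convex C" and "C \<noteq> {}"
  obtains c where "c \<in> C" and "\<And>c'. c' \<in> C \<Longrightarrow> norm (x - c) \<le> norm (x - c')"
proof -
  define f where "f c = (norm (x - c))\<^sup>2" for c
  define d where "d = Inf (f ` C)"
  define \<epsilon> where "\<epsilon> n = 1 / real (Suc n)" for n
  have "\<epsilon> \<longlonglongrightarrow> 0"
    unfolding \<epsilon>_def by (rule LIMSEQ_Suc [OF lim_const_over_n])
  have bdd: "bdd_below (f ` C)"
    by (rule bdd_belowI [of _ 0]) (auto simp: f_def)
  have d_le: "d \<le> f c" if "c \<in> C" for c
    unfolding d_def using bdd that by (simp add: cInf_lower)
  have "\<exists>c\<in>C. f c < d + \<epsilon> n" for n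
    using cInf_less_iff [OF _ bdd, of "d + \<epsilon> n"] assms(3) by (auto simp: d_def \<epsilon>_def)
  then obtain u where uC: "\<And>n. u n \<in> C" and u: "\<And>n. f (u n) < d + \<epsilon> n"
    by metis
  have "(dist (u m) (u n))\<^sup>2 \<le> 2 * \<epsilon> m + 2 * \<epsilon> n" for m n
  proof -
    have "(1/2) *\<^sub>R u m + (1/2) *\<^sub>R u n \<in> C"
      using convexD [OF assms(2) uC uC, of "1/2" "1/2"] by simp
    then have "d \<le> f ((1/2) *\<^sub>R (u m + u n))"
      by (simp add: d_le scaleR_right_distrib)
    then show ?thesis
      using apollonius_identity [of "u m" "u n" x] u [of m] u [of n] by (simp add: f_def dist_norm)
  qed
  moreover have "(\<lambda>n. 2 * \<epsilon> n) \<longlonglongrightarrow> 0"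
    using tendsto_mult [OF tendsto_const \<open>\<epsilon> \<longlonglongrightarrow> 0\<close>, of 2] by simp
  ultimately obtain c where lim: "u \<longlonglongrightarrow> c"
    using Cauchy_if_power2_dist_le Cauchy_convergent_iff convergent_def by metis
  have "c \<in> C"
    using closed_sequentially [OF assms(1) _ lim] uC by blast
  have "(\<lambda>n. f (u n)) \<longlonglongrightarrow> f c"
    unfolding f_def by (intro tendsto_intros lim)
  moreover have "(\<lambda>n. d + \<epsilon> n) \<longlonglongrightarrow> d"
    using tendsto_add [OF tendsto_const \<open>\<epsilon> \<longlonglongrightarrow> 0\<close>, of d] by simp
  ultimately have "f c \<le> d"
    using u by (intro LIMSEQ_le) (auto intro: less_imp_le)
  then have "norm (x - c) \<le> norm (x - c')" if "c' \<in> C" for c'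
    using d_le [OF that] by (simp add: f_def power2_le_imp_le)
  with \<open>c \<in> C\<close> that show ?thesis
    by blast
qed

lemma cinner_eq_0_if_norm_minimal:
  fixes y z :: "'a::complex_inner"
  assumes min: "\<And>t. norm y \<le> norm (y - t *\<^sub>C z)"
  shows "cinner y z = 0"
proof -
  define c where "c = cinner y z"
  define s where "s = 1 / ((norm z)\<^sup>2 + 1)"
  have "0 < (norm z)\<^sup>2 + 1"
    by (simp add: add_nonneg_pos)
  then have "0 < s" and sZ: "s * (norm z)\<^sup>2 \<le> 1"
    by (simp_all add: s_def field_simps)
  \<comment> \<open>Subtracting a small multiple of the component of \<open>y\<close> along \<open>z\<close> would shorten \<open>y\<close>
    unless \<open>c = 0\<close>.\<close>
  define t where "t = complex_of_real s * cnj c"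
  have "cinner y (t *\<^sub>C z) = complex_of_real (s * (cmod c)\<^sup>2)"
    by (simp add: cinner_scaleC_right t_def c_def cnj_mult_self)
  moreover have "(norm (t *\<^sub>C z))\<^sup>2 = s * s * (cmod c)\<^sup>2 * (norm z)\<^sup>2"
    using \<open>0 < s\<close> by (simp add: norm_scaleC t_def norm_mult power_mult_distrib power2_eq_square)
  ultimately have expand: "(norm (y - t *\<^sub>C z))\<^sup>2 =
      (norm y)\<^sup>2 + s * s * (cmod c)\<^sup>2 * (norm z)\<^sup>2 - 2 * s * (cmod c)\<^sup>2"
    by (simp add: power2_norm_diff)
  have "(norm y)\<^sup>2 \<le> (norm (y - t *\<^sub>C z))\<^sup>2"
    using min [of t] by (simp add: power_mono)
  moreover have "(norm (y - t *\<^sub>C z))\<^sup>2 - (norm y)\<^sup>2 =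
      s * ((cmod c)\<^sup>2 * (s * (norm z)\<^sup>2 - 2))"
    unfolding expand by (simp add: algebra_simps)
  ultimately have "0 \<le> s * ((cmod c)\<^sup>2 * (s * (norm z)\<^sup>2 - 2))"
    by linarith
  then have "(cmod c)\<^sup>2 * (s * (norm z)\<^sup>2 - 2) \<ge> 0"
    using \<open>0 < s\<close> by (simp add: zero_le_mult_iff)
  with sZ have "c = 0"
    by (auto simp: zero_le_mult_iff)
  then show ?thesis
    by (simp add: c_def)
qed

lemma not_surj_isometry_obtains_orthogonal_unit:
  fixes V :: "'a::chilbert_space \<Rightarrow> 'b::chilbert_space"
  assumes iso: "isometry V" and "\<not> surj V"
  obtains e where "norm e = 1" and "\<And>k. cinner e (V k) = 0"
proof -
  have lin: "bounded_clinear V"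
    using iso by (simp add: isometry_def)
  obtain x where x: "x \<notin> range V"
    using \<open>\<not> surj V\<close> by auto
  have "convex (range V)"
    by (intro convex_linear_image convex_UNIV bounded_linear.linear
        bounded_clinear_bounded_linear lin)
  then obtain c where "c \<in> range V"
    and c: "\<And>c'. c' \<in> range V \<Longrightarrow> norm (x - c) \<le> norm (x - c')"
    using closed_convex_nearest_point [OF closed_range_isometry [OF iso]] by blast
  then obtain a where a: "c = V a"
    by blast
  define y where "y = x - V a"
  have "y \<noteq> 0"
    using x by (auto simp: y_def)
  have y_perp: "cinner y (V k) = 0" for k
  proof (rule cinner_eq_0_if_norm_minimal)
    fix t
    have "y - t *\<^sub>C V k = x - V (a + t *\<^sub>C k)"
      by (simp add: y_def bounded_clinear_add [OF lin] bounded_clinear_scaleC [OF lin])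
    moreover have "norm y \<le> norm (x - V (a + t *\<^sub>C k))"
      using c [of "V (a + t *\<^sub>C k)"] by (simp add: y_def a)
    ultimately show "norm y \<le> norm (y - t *\<^sub>C V k)"
      by simp
  qed
  show ?thesis
  proof
    show "norm ((1 / norm y) *\<^sub>R y) = 1"
      using \<open>y \<noteq> 0\<close> by simp
    show "cinner ((1 / norm y) *\<^sub>R y) (V k) = 0" for k
      by (simp add: cinner_scaleR_left y_perp)
  qed
qed

section \<open>Orthonormal sequences\<close>

definition orthonormal :: "(nat \<Rightarrow> 'a::complex_inner) \<Rightarrow> bool" where
  "orthonormal u \<longleftrightarrow> (\<forall>n m. cinner (u n) (u m) = (if n = m then 1 else 0))"

lemma orthonormalI:
  assumes "\<And>n. norm (u n) = 1" and "\<And>n m. n \<noteq> m \<Longrightarrow> cinner (u n) (u m) = 0"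
  shows "orthonormal u"
  using assms by (simp add: orthonormal_def cinner_self_norm)

lemma orthonormal_wandering_orbit:
  fixes V :: "'a::complex_inner \<Rightarrow> 'a"
  assumes V: "isometry V" and "norm e = 1" and perp: "\<And>k. cinner e (V k) = 0"
  shows "orthonormal (\<lambda>n. (V ^^ n) e)"
proof (rule orthonormalI)
  show "norm ((V ^^ n) e) = 1" for n
    using assms by (simp add: norm_funpow_isometry)
  have less: "cinner ((V ^^ n) e) ((V ^^ m) e) = 0" if "n < m" for n m
  proof -
    obtain d where "m = n + Suc d"
      using less_imp_Suc_add [OF \<open>n < m\<close>] by auto
    then have "(V ^^ m) e = (V ^^ n) (V ((V ^^ d) e))"
      by (simp only: funpow_add funpow.simps(2) comp_apply)
    then show ?thesis
      by (simp add: cinner_funpow_isometry [OF V] perp)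
  qed
  show "cinner ((V ^^ n) e) ((V ^^ m) e) = 0" if "n \<noteq> m" for n m
    using that less [of n m] less [of m n] cinner_commute [of "(V ^^ n) e" "(V ^^ m) e"]
    by (cases "n < m") auto
qed

lemma power2_norm_sum_orthonormal:
  assumes "orthonormal w"
  shows "(norm (\<Sum>n\<in>F. a n *\<^sub>C w n))\<^sup>2 = (\<Sum>n\<in>F. (cmod (a n))\<^sup>2)"
proof (cases "finite F")
  case True
  have "cinner (\<Sum>n\<in>F. a n *\<^sub>C w n) (\<Sum>n\<in>F. a n *\<^sub>C w n) =
      (\<Sum>m\<in>F. \<Sum>n\<in>F. a m * (cnj (a n) * cinner (w n) (w m)))"
    by (simp add: cinner_sum_left cinner_sum_right cinner_scaleC_left cinner_scaleC_right
        sum_distrib_left mult_ac)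
  also have "\<dots> = (\<Sum>m\<in>F. \<Sum>n\<in>F. if n = m then cnj (a n) * a m else 0)"
    using assms by (intro sum.cong refl) (simp add: orthonormal_def)
  also have "\<dots> = (\<Sum>n\<in>F. cnj (a n) * a n)"
    using True by simp
  also have "\<dots> = complex_of_real (\<Sum>n\<in>F. (cmod (a n))\<^sup>2)"
    by (simp only: cnj_mult_self of_real_sum)
  finally show ?thesis
    by (simp only: cinner_self_norm of_real_eq_iff)
qed simp

lemma bessel_inequality:
  assumes "orthonormal u"
  shows "(\<Sum>n\<in>F. (cmod (cinner (u n) k))\<^sup>2) \<le> (norm k)\<^sup>2"
proof (cases "finite F")
  case True
  define s where "s = (\<Sum>n\<in>F. cinner (u n) k *\<^sub>C u n)"
  have norm_s: "(norm s)\<^sup>2 = (\<Sum>n\<in>F. (cmod (cinner (u n) k))\<^sup>2)"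
    unfolding s_def by (rule power2_norm_sum_orthonormal [OF assms])
  have "cinner s k = (\<Sum>n\<in>F. cnj (cinner (u n) k) * cinner (u n) k)"
    by (simp add: s_def cinner_sum_left cinner_scaleC_left)
  also have "\<dots> = cinner s s"
    by (simp only: cnj_mult_self cinner_self_norm norm_s of_real_sum)
  finally have "cinner s (k - s) = 0"
    by (simp add: cinner_diff_right)
  then have "(norm k)\<^sup>2 = (norm s)\<^sup>2 + (norm (k - s))\<^sup>2"
    using power2_norm_add [of s "k - s"] by simp
  then show ?thesis
    by (simp add: norm_s)
qed simp

text \<open>For orthonormal \<open>u\<close> and \<open>w\<close>, the latter in a complete space, this is the isometry
  \<open>u n \<mapsto> w n\<close> on the closed span of \<open>u\<close>, extended by \<open>0\<close> to its orthogonal complement.\<close>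

definition orthonormal_transfer ::
  "(nat \<Rightarrow> 'a::complex_inner) \<Rightarrow> (nat \<Rightarrow> 'b::complex_inner) \<Rightarrow> 'a \<Rightarrow> 'b" where
  "orthonormal_transfer u w k = (\<Sum>n. cinner (u n) k *\<^sub>C w n)"

lemma summable_orthonormal_transfer:
  fixes w :: "nat \<Rightarrow> 'b::chilbert_space"
  assumes u: "orthonormal u" and w: "orthonormal w"
  shows "summable (\<lambda>n. cinner (u n) k *\<^sub>C w n)"
  unfolding summable_Cauchy
proof (intro allI impI)
  fix e :: real
  assume "0 < e"
  have "summable (\<lambda>n. (cmod (cinner (u n) k))\<^sup>2)"
    by (rule summableI_nonneg_bounded [where x = "(norm k)\<^sup>2"])
      (auto intro: bessel_inequality [OF u])
  then obtain N
    where N: "\<And>m n. m \<ge> N \<Longrightarrow> norm (\<Sum>i\<in>{m..<n}. (cmod (cinner (u i) k))\<^sup>2) < e\<^sup>2"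
    using \<open>0 < e\<close> unfolding summable_Cauchy by (metis zero_less_power)
  have "norm (\<Sum>i\<in>{m..<n}. cinner (u i) k *\<^sub>C w i) < e" if "m \<ge> N" for m n
  proof -
    have "(norm (\<Sum>i\<in>{m..<n}. cinner (u i) k *\<^sub>C w i))\<^sup>2 =
        (\<Sum>i\<in>{m..<n}. (cmod (cinner (u i) k))\<^sup>2)"
      by (rule power2_norm_sum_orthonormal [OF w])
    also have "\<dots> < e\<^sup>2"
      using N [OF that, of n] by simp
    finally show ?thesis
      using \<open>0 < e\<close> by (simp add: power_less_imp_less_base)
  qed
  then show "\<exists>N. \<forall>m\<ge>N. \<forall>n. norm (\<Sum>i\<in>{m..<n}. cinner (u i) k *\<^sub>C w i) < e"
    by blast
qed

lemma norm_orthonormal_transfer_le: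
  fixes w :: "nat \<Rightarrow> 'b::chilbert_space"
  assumes u: "orthonormal u" and w: "orthonormal w"
  shows "norm (orthonormal_transfer u w k) \<le> norm k"
proof (rule LIMSEQ_le_const2)
  show "(\<lambda>N. norm (\<Sum>n<N. cinner (u n) k *\<^sub>C w n)) \<longlonglongrightarrow> norm (orthonormal_transfer u w k)"
    unfolding orthonormal_transfer_def
    by (intro tendsto_norm summable_LIMSEQ summable_orthonormal_transfer u w)
  have "(norm (\<Sum>n<N. cinner (u n) k *\<^sub>C w n))\<^sup>2 \<le> (norm k)\<^sup>2" for N
    unfolding power2_norm_sum_orthonormal [OF w] by (rule bessel_inequality [OF u])
  then have "norm (\<Sum>n<N. cinner (u n) k *\<^sub>C w n) \<le> norm k" for N
    by (rule power2_le_imp_le) simp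
  then show "\<exists>N. \<forall>n\<ge>N. norm (\<Sum>n<n. cinner (u n) k *\<^sub>C w n) \<le> norm k"
    by blast
qed

lemma bounded_clinear_orthonormal_transfer:
  fixes w :: "nat \<Rightarrow> 'b::chilbert_space"
  assumes u: "orthonormal u" and w: "orthonormal w"
  shows "bounded_clinear (orthonormal_transfer u w)"
proof -
  note summable = summable_orthonormal_transfer [OF u w]
  have add: "orthonormal_transfer u w (x + y) =
      orthonormal_transfer u w x + orthonormal_transfer u w y" for x y
    unfolding orthonormal_transfer_def
    by (simp add: suminf_add [OF summable summable] cinner_add_right scaleC_add_left)
  have scaleC: "orthonormal_transfer u w (a *\<^sub>C x) = a *\<^sub>C orthonormal_transfer u w x" for a x
    unfolding orthonormal_transfer_def
    by (simp add: bounded_linear.suminf [OF bounded_linear_scaleC summable]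
        cinner_scaleC_right scaleC_scaleC)
  have "bounded_linear (orthonormal_transfer u w)"
    by (rule bounded_linear_intro [where K = 1])
      (auto simp: add scaleC scaleR_scaleC norm_orthonormal_transfer_le [OF u w])
  with scaleC show ?thesis
    by (simp add: bounded_clinear_def)
qed

lemma orthonormal_transfer_basis:
  assumes "orthonormal u"
  shows "orthonormal_transfer u w (u m) = w m"
proof -
  have "(\<lambda>n. cinner (u n) (u m) *\<^sub>C w n) = (\<lambda>n. if n = m then w n else 0)"
    using assms by (auto simp: orthonormal_def scaleC_one)
  then show ?thesis
    unfolding orthonormal_transfer_def using sums_single [of m w] sums_unique by metis
qed

lemma orthonormal_transfer_orbit_intertwines:
  fixes V :: "'a::complex_inner \<Rightarrow> 'a" and W :: "'b::chilbert_space \<Rightarrow> 'b" and e f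
  defines "P \<equiv> orthonormal_transfer (\<lambda>n. (V ^^ n) e) (\<lambda>n. (W ^^ n) f)"
  assumes V: "isometry V" and "norm e = 1" and perp: "\<And>k. cinner e (V k) = 0"
    and W: "bounded_clinear W" and w: "orthonormal (\<lambda>n. (W ^^ n) f)"
  shows "P \<circ> V = W \<circ> P"
proof
  fix k
  have u: "orthonormal (\<lambda>n. (V ^^ n) e)"
    by (rule orthonormal_wandering_orbit [OF V \<open>norm e = 1\<close> perp])
  define c where "c n = cinner ((V ^^ n) e) (V k) *\<^sub>C (W ^^ n) f" for n
  \<comment> \<open>The coefficients of \<open>V k\<close> are those of \<open>k\<close> shifted by one place.\<close>
  have "c 0 = 0"
    by (simp add: c_def perp)
  have c_Suc: "c (Suc n) = W (cinner ((V ^^ n) e) k *\<^sub>C (W ^^ n) f)" for n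
    by (simp add: c_def isometry_cinner [OF V] bounded_clinear_scaleC [OF W])
  have "summable c"
    unfolding c_def by (rule summable_orthonormal_transfer [OF u w])
  have "P (V k) = suminf c"
    by (simp add: P_def orthonormal_transfer_def c_def [abs_def])
  also have "\<dots> = (\<Sum>n. c (Suc n))"
    using suminf_split_head [OF \<open>summable c\<close>] \<open>c 0 = 0\<close> by simp
  also have "\<dots> = W (P k)"
    unfolding c_Suc P_def orthonormal_transfer_def
    by (rule bounded_linear.suminf [OF bounded_clinear_bounded_linear [OF W]
          summable_orthonormal_transfer [OF u w], symmetric])
  finally show "(P \<circ> V) k = (W \<circ> P) k"
    by simp
qed

section \<open>Dense intertwining with the unilateral shift\<close>

lemma cspan_subset_range:
  assumes P: "bounded_clinear P" and "A \<subseteq> range P"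
  shows "cspan A \<subseteq> range P"
proof
  fix v
  assume "v \<in> cspan A"
  then obtain F c where v: "v = (\<Sum>a\<in>F. c a *\<^sub>C a)" and "finite F" and "F \<subseteq> A"
    unfolding cspan_def by blast
  from \<open>finite F\<close> \<open>F \<subseteq> A\<close> have "(\<Sum>a\<in>F. c a *\<^sub>C a) \<in> range P"
  proof (induction F rule: finite_induct)
    case empty
    show ?case
      using bounded_clinear_zero [OF P] by (metis rangeI sum.empty)
  next
    case (insert a F)
    then obtain k ka where "(\<Sum>a\<in>F. c a *\<^sub>C a) = P k" and "a = P ka"
      using \<open>A \<subseteq> range P\<close> by auto
    with insert.hyps have "(\<Sum>a\<in>insert a F. c a *\<^sub>C a) = P (c a *\<^sub>C ka + k)"
      by (simp add: bounded_clinear_add [OF P] bounded_clinear_scaleC [OF P])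
    then show ?case
      by simp
  qed
  with v show "v \<in> range P"
    by simp
qed

lemma orthogonal_to_dense_cspan_eq_0:
  fixes x :: "'a::complex_inner"
  assumes perp: "\<And>a. a \<in> A \<Longrightarrow> cinner x a = 0" and dense: "closure (cspan A) = UNIV"
  shows "x = 0"
proof -
  have perp_span: "cinner x v = 0" if v: "v \<in> cspan A" for v
  proof -
    obtain F c where "v = (\<Sum>a\<in>F. c a *\<^sub>C a)" and "F \<subseteq> A"
      using v unfolding cspan_def by blast
    then show ?thesis
      using perp by (auto simp: cinner_sum_right cinner_scaleC_right intro!: sum.neutral)
  qed
  obtain f where f: "\<And>n. f n \<in> cspan A" and "f \<longlonglongrightarrow> x"
    using dense closure_sequential [of x "cspan A"] by blast
  then have "(\<lambda>n. norm (x - f n)) \<longlonglongrightarrow> norm (x - x)"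
    by (intro tendsto_intros)
  moreover have "norm x \<le> norm (x - f n)" for n
    using power2_norm_diff [of x "f n"] perp_span [OF f] by (simp add: power2_le_imp_le)
  ultimately have "norm x \<le> norm (x - x)"
    by (intro LIMSEQ_le_const) auto
  then show ?thesis
    by simp
qed

lemma simple_unilateral_shift_not_surj:
  fixes S :: "'s::complex_inner \<Rightarrow> 's"
  assumes "simple_unilateral_shift S"
  shows "\<not> surj S"
proof
  assume "surj S"
  have iso: "isometry S"
    using assms by (simp add: simple_unilateral_shift_def)
  obtain e where "norm e = 1"
    and orth: "\<And>n m. n \<noteq> m \<Longrightarrow> cinner ((S ^^ n) e) ((S ^^ m) e) = 0"
    and dense: "closure (cspan (range (\<lambda>n. (S ^^ n) e))) = UNIV"
    using assms unfolding simple_unilateral_shift_def by blast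
  obtain x where e: "e = S x"
    using \<open>surj S\<close> by (metis surjD)
  \<comment> \<open>A preimage of the first basis vector is orthogonal to the whole basis.\<close>
  have "cinner x ((S ^^ n) e) = 0" for n
  proof -
    have "cinner x ((S ^^ n) e) = cinner ((S ^^ 0) e) ((S ^^ Suc n) e)"
      by (simp add: e isometry_cinner [OF iso])
    also have "\<dots> = 0"
      by (rule orth) simp
    finally show ?thesis .
  qed
  then have "x = 0"
    by (intro orthogonal_to_dense_cspan_eq_0 [OF _ dense]) auto
  then have "e = 0"
    using iso by (simp add: e isometry_def bounded_clinear_zero)
  with \<open>norm e = 1\<close> show False
    by simp
qed

lemma not_surj_isometry_dense_intertwined_shift:
  fixes V :: "'a::chilbert_space \<Rightarrow> 'a" and S :: "'s::chilbert_space \<Rightarrow> 's"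
  assumes V: "isometry V" and "\<not> surj V" and S: "simple_unilateral_shift S"
  shows "V \<prec>\<^sub>d S"
proof -
  obtain e where "norm e = 1" and perp: "\<And>k. cinner e (V k) = 0"
    using not_surj_isometry_obtains_orthogonal_unit [OF V \<open>\<not> surj V\<close>] by blast
  obtain f where f: "norm f = 1" "\<And>n m. n \<noteq> m \<Longrightarrow> cinner ((S ^^ n) f) ((S ^^ m) f) = 0"
    and dense: "closure (cspan (range (\<lambda>n. (S ^^ n) f))) = UNIV"
    using S unfolding simple_unilateral_shift_def by blast
  have iso_S: "isometry S" and lin_S: "bounded_clinear S"
    using S by (simp_all add: simple_unilateral_shift_def isometry_def)
  define P where "P = orthonormal_transfer (\<lambda>n. (V ^^ n) e) (\<lambda>n. (S ^^ n) f)"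
  have u: "orthonormal (\<lambda>n. (V ^^ n) e)"
    by (rule orthonormal_wandering_orbit [OF V \<open>norm e = 1\<close> perp])
  have w: "orthonormal (\<lambda>n. (S ^^ n) f)"
    using f by (intro orthonormalI) (simp_all add: norm_funpow_isometry [OF iso_S])
  have lin_P: "bounded_clinear P"
    unfolding P_def by (rule bounded_clinear_orthonormal_transfer [OF u w])
  have "(S ^^ n) f = P ((V ^^ n) e)" for n
    unfolding P_def by (rule orthonormal_transfer_basis [OF u, symmetric])
  then have "range (\<lambda>n. (S ^^ n) f) \<subseteq> range P"
    by auto
  then have "closure (cspan (range (\<lambda>n. (S ^^ n) f))) \<subseteq> closure (range P)"
    by (intro closure_mono cspan_subset_range [OF lin_P])
  then have "closure (range P) = UNIV"
    using dense by auto
  moreover have "P \<circ> V = S \<circ> P"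
    unfolding P_def
    by (rule orthonormal_transfer_orbit_intertwines [OF V \<open>norm e = 1\<close> perp lin_S w])
  ultimately show ?thesis
    using lin_P by (auto simp: dense_intertwined_def)
qed

lemma not_surj_if_dense_factor_through_shift:
  fixes S :: "'s::chilbert_space \<Rightarrow> 's"
  assumes "simple_unilateral_shift S" and "closure (range (Z \<circ> X)) = UNIV" and "Z \<circ> V = S \<circ> Z"
  shows "\<not> surj V"
proof
  assume "surj V"
  then have "range Z = range (S \<circ> Z)"
    using \<open>Z \<circ> V = S \<circ> Z\<close> by (metis image_comp)
  then have "range (Z \<circ> X) \<subseteq> range S"
    by auto
  then have "closure (range (Z \<circ> X)) \<subseteq> range S"
    using assms(1) by (intro closure_minimal closed_range_isometry)
      (simp_all add: simple_unilateral_shift_def)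
  then have "surj S"
    using assms(2) by auto
  with simple_unilateral_shift_not_surj [OF assms(1)] show False
    by contradiction
qed

theorem lemma2p1:
  fixes T :: "'a::chilbert_space \<Rightarrow> 'a"
    and X :: "'a \<Rightarrow> 'k::chilbert_space" and V :: "'k \<Rightarrow> 'k"
    and S :: "'s::chilbert_space \<Rightarrow> 's"
  assumes "power_bounded T"
    and "simple_unilateral_shift S"
    and "isometric_asymptote T X V TYPE('s)"
  shows "T \<prec>\<^sub>d S \<longleftrightarrow> \<not> unitary V"
proof -
  have V: "isometry V" and "T \<prec>\<^sub>d V"
    and factor: "\<And>W (Y::'a \<Rightarrow> 's). isometry W \<Longrightarrow> bounded_clinear Y \<Longrightarrow> Y \<circ> T = W \<circ> Y \<Longrightarrow>
        \<exists>Z. bounded_clinear Z \<and> Z \<circ> V = W \<circ> Z \<and> Y = Z \<circ> X"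
    using assms(3) unfolding isometric_asymptote_def dense_intertwined_def by blast+
  have "\<not> surj V" if "T \<prec>\<^sub>d S"
  proof -
    obtain Y where "bounded_clinear Y" and dense: "closure (range Y) = UNIV"
      and "Y \<circ> T = S \<circ> Y"
      using \<open>T \<prec>\<^sub>d S\<close> by (auto simp: dense_intertwined_def)
    moreover have "isometry S"
      using assms(2) by (simp add: simple_unilateral_shift_def)
    ultimately obtain Z where "Z \<circ> V = S \<circ> Z" and "Y = Z \<circ> X"
      using factor by blast
    with dense show ?thesis
      using not_surj_if_dense_factor_through_shift [OF assms(2)] by blast
  qed
  moreover have "T \<prec>\<^sub>d S" if "\<not> surj V"
    using not_surj_isometry_dense_intertwined_shift [OF V that assms(2)]
    by (rule dense_intertwined_trans [OF \<open>T \<prec>\<^sub>d V\<close>])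
  ultimately show ?thesis
    using V by (auto simp: unitary_def)
qed

end
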